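(* For each integer $n \ge 2$ and real $\gamma$, consider the infinite graph with vertex set $\mathbb{Z}^+$ in which vertices $1,\ldots,n$ form a complete graph $K_n$, vertices $n,n+1,n+2,\ldots$ form an infinite path (edges $\{k,k+1\}$ for $k\ge n$), and vertex $n$ (the vertex where the path is attached) carries a self-loop of weight $\gamma$. Let $H$ be its adjacency operator on $\ell^2(\mathbb{Z}^+)$: in the standard basis $\{e_j\}$, $\langle e_n,He_n\rangle=\gamma$, $\langle e_i,He_j\rangle=1$ for distinct $i,j\in\{1,\ldots,n\}$, $\langle e_k,He_{k+1}\rangle=\langle e_{k+1},He_k\rangle=1$ for $k\ge n$, all other entries $0$. Let $z_1=n^{-1/2}\sum_{j=1}^n e_j$. If $\gamma = n+\mathcal{O}(1)$, then for $t=\pi/(2\sqrt{n})$, \[ \left|\langle e_n, e^{-itH} z_1\rangle\right| = 1+o(1). \]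
   Context: Asymptotic notation refers to $n\to\infty$, with $\gamma=\gamma_n$ such that $\gamma_n-n$ is bounded. The inner product is $\langle x,y\rangle=\sum_u \overline{x_u}y_u$. *)

theory Defs
  imports Complex_Main
begin

text \<open>Vertices are the positive integers 1,2,3,...; we use nat indices and
  treat index 0 as absent (all matrix entries involving 0 vanish, and all
  vectors considered vanish at 0).\<close>

definition Hent :: "nat \<Rightarrow> real \<Rightarrow> nat \<Rightarrow> nat \<Rightarrow> complex" where
  "Hent n \<gamma> i j =
     (if i = n \<and> j = n then complex_of_real \<gamma>
      else if 1 \<le> i \<and> i \<le> n \<and> 1 \<le> j \<and> j \<le> n \<and> i \<noteq> j then 1
      else if n \<le> i \<and> n \<le> j \<and> (j = i + 1 \<or> i = j + 1) then 1
      else 0)"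

text \<open>Action of the adjacency operator H on a vector (matrix-vector product;
  row i has nonzero entries only in columns 1..max n (i+1), so this sum is exact).\<close>
definition Happ :: "nat \<Rightarrow> real \<Rightarrow> (nat \<Rightarrow> complex) \<Rightarrow> (nat \<Rightarrow> complex)" where
  "Happ n \<gamma> v = (\<lambda>i. \<Sum>j\<in>{1..max n (i + 1)}. Hent n \<gamma> i j * v j)"

text \<open>Component k of e^{-itH} v, via the norm-convergent exponential series
  of the bounded operator H.\<close>
definition expH :: "nat \<Rightarrow> real \<Rightarrow> real \<Rightarrow> (nat \<Rightarrow> complex) \<Rightarrow> nat \<Rightarrow> complex" where
  "expH n \<gamma> t v k = (\<Sum>m. ((- \<i> * complex_of_real t) ^ m / of_nat (fact m)) * ((Happ n \<gamma> ^^ m) v) k)"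

definition z1 :: "nat \<Rightarrow> nat \<Rightarrow> complex" where
  "z1 n j = (if 1 \<le> j \<and> j \<le> n then complex_of_real (1 / sqrt (real n)) else 0)"

end

theory Submission
  imports Defs "HOL-Analysis.Analysis" "HOL-Real_Asymp.Real_Asymp"
begin

text \<open>
  Write \<open>X(s) = exp(-isH) z\<^sub>1\<close>. Apart from the term \<open>X\<^sub>n\<^sub>+\<^sub>1\<close> through which amplitude
  leaks into the path, \<open>H\<close> acts on the pair \<open>A = X\<^sub>1 + ... + X\<^sub>n\<^sub>-\<^sub>1\<close>, \<open>b = X\<^sub>n\<close> by the
  matrix \<open>M\<close> with rows \<open>(n - 2, n - 1)\<close> and \<open>(1, \<gamma>)\<close>. So if \<open>(p, q)\<close> solves the adjoint equation
  \<open>(p, q)' = i (p, q) M\<close> with \<open>(p, q)(t) = (0, 1)\<close>, the pairing \<open>p A + q b\<close> has derivative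
  \<open>-i q X\<^sub>n\<^sub>+\<^sub>1\<close>. By unitarity \<open>|X\<^sub>n\<^sub>+\<^sub>1| \<le> 1\<close>, and \<open>|q| \<le> 1 + |\<gamma> - n + 2| / D\<close> where
  \<open>D \<sim> 2 sqrt n\<close> is the gap between the eigenvalues of \<open>M\<close>. Hence \<open>b(t)\<close> differs from the
  pairing at time \<open>0\<close> by \<open>O(t) = O(1 / sqrt n)\<close>, and that value is explicit: up to a unimodular
  factor it is \<open>w\<^sub>+ + w\<^sub>- exp(iDt)\<close> with \<open>w\<^sub>\<plusminus> \<longrightarrow> \<plusminus>1/2\<close> and \<open>D t \<longrightarrow> \<pi>\<close>.

  Unitarity is proved directly: \<open>X\<close> is an entire function of \<open>s\<close> whose power series coefficients
  \<open>(H\<^sup>m z\<^sub>1)\<^sub>k\<close> vanish for \<open>m < k - n\<close>, and since \<open>H\<close> is symmetric the mass of \<open>X\<close> on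
  \<open>{1..K}\<close> changes only by a flux through the edge \<open>{K, K + 1}\<close>, which tends to \<open>0\<close> with \<open>K\<close>.
\<close>

lemma Hent_sym: "Hent n g i j = Hent n g j i"
  unfolding Hent_def by auto

lemma cnj_Hent: "cnj (Hent n g i j) = Hent n g i j"
  unfolding Hent_def by auto

lemma norm_Hent_le: "cmod (Hent n g i j) \<le> 1 + \<bar>g\<bar>"
  unfolding Hent_def by auto

lemma Hent_eq_0_off_row_support: "j \<notin> {1..n} \<union> {i - 1, i + 1} \<Longrightarrow> Hent n g i j = 0"
  unfolding Hent_def by auto

lemma Hent_eq_0_beyond: "max n (i + 1) < j \<Longrightarrow> Hent n g i j = 0"
  unfolding Hent_def by auto

lemma Hent_eq_0_on_path: "n < i \<Longrightarrow> j \<noteq> i + 1 \<Longrightarrow> j + 1 \<noteq> i \<Longrightarrow> Hent n g i j = 0"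
  unfolding Hent_def by auto

definition H_row_bound :: "nat \<Rightarrow> real \<Rightarrow> real" where
  "H_row_bound n g = (real n + 2) * (1 + \<bar>g\<bar>)"

lemma H_row_bound_nonneg: "0 \<le> H_row_bound n g"
  unfolding H_row_bound_def by simp

lemma norm_Happ_le:
  assumes "\<And>j. cmod (v j) \<le> B"
  shows "cmod (Happ n g v i) \<le> H_row_bound n g * B"
proof -
  define T where "T = {1..n} \<union> {i - 1, i + 1}"
  have B: "0 \<le> B" using assms[of 0] norm_ge_zero order_trans by blast
  have card_T: "card T \<le> n + 2"
    unfolding T_def using card_Un_le[of "{1..n}" "{i - 1, i + 1}"] card_insert_le[of "{i + 1}" "i - 1"]
    by simp
  have "cmod (Happ n g v i) \<le> (\<Sum>j\<in>{1..max n (i + 1)}. cmod (Hent n g i j * v j))"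
    unfolding Happ_def by (rule norm_sum)
  also have "\<dots> = (\<Sum>j\<in>{1..max n (i + 1)} \<inter> T. cmod (Hent n g i j * v j))"
    by (rule sum.mono_neutral_right) (auto simp: T_def Hent_eq_0_off_row_support)
  also have "\<dots> \<le> (\<Sum>j\<in>{1..max n (i + 1)} \<inter> T. (1 + \<bar>g\<bar>) * B)"
    by (rule sum_mono) (simp add: norm_mult mult_mono norm_Hent_le assms B)
  also have "\<dots> \<le> (\<Sum>j\<in>T. (1 + \<bar>g\<bar>) * B)"
    by (rule sum_mono2) (auto simp: T_def B)
  also have "\<dots> \<le> H_row_bound n g * B"
  proof -
    have "real (card T) \<le> real n + 2" using card_T by linarith
    then show ?thesis
      using B unfolding H_row_bound_def by (simp add: mult.assoc mult_right_mono)
  qed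
  finally show ?thesis .
qed

lemma norm_Happ_pow_le:
  assumes "\<And>j. cmod (v j) \<le> B"
  shows "cmod ((Happ n g ^^ m) v k) \<le> H_row_bound n g ^ m * B"
proof (induction m arbitrary: k)
  case (Suc m)
  then show ?case
    using norm_Happ_le[of "(Happ n g ^^ m) v" "H_row_bound n g ^ m * B"] by (simp add: mult.assoc)
qed (simp add: assms)

lemma Happ_pow_eq_0_beyond:
  assumes "\<And>j. N < j \<Longrightarrow> v j = 0" "n \<le> N"
  shows "N + m < k \<Longrightarrow> (Happ n g ^^ m) v k = 0"
proof (induction m arbitrary: k)
  case (Suc m)
  have "Hent n g k j * (Happ n g ^^ m) v j = 0" for j
    using Suc assms(2) by (cases "j = k + 1 \<or> j + 1 = k") (auto simp: Hent_eq_0_on_path)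
  then have "Happ n g ((Happ n g ^^ m) v) k = 0"
    unfolding Happ_def by (simp add: sum.neutral)
  then show ?case by simp
qed (simp add: assms(1))

lemma cnj_Happ_pow:
  assumes "\<And>j. cnj (v j) = v j"
  shows "cnj ((Happ n g ^^ m) v k) = (Happ n g ^^ m) v k"
  by (induction m arbitrary: k) (simp_all add: assms Happ_def cnj_Hent)

section \<open>The orbit \<open>exp(xH) z\<^sub>1\<close> as an entire function of \<open>x\<close>\<close>

definition exp_tail :: "real \<Rightarrow> nat \<Rightarrow> real" where
  "exp_tail r j = (\<Sum>m. if j \<le> m then r ^ m / fact m else 0)"

lemma exp_tail_sums:
  fixes r :: real
  shows "(\<lambda>m. if j \<le> m then r ^ m / fact m else 0) sums (exp r - (\<Sum>m<j. r ^ m / fact m))"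
proof -
  have "(\<lambda>m. r ^ m / fact m) sums exp r"
    using exp_converges[of r] by (simp add: field_simps)
  then have "(\<lambda>m. r ^ m / fact m - (if m \<in> {..<j} then r ^ m / fact m else 0))
      sums (exp r - (\<Sum>m<j. r ^ m / fact m))"
    by (intro sums_diff sums_If_finite_set) simp_all
  moreover have "(\<lambda>m. r ^ m / fact m - (if m \<in> {..<j} then r ^ m / fact m else 0))
      = (\<lambda>m. if j \<le> m then r ^ m / fact m else 0)"
    by auto
  ultimately show ?thesis by simp
qed

lemma summable_exp_tail:
  fixes r :: real
  shows "summable (\<lambda>m. if j \<le> m then r ^ m / fact m else 0)"
  by (rule sums_summable[OF exp_tail_sums])

lemma exp_tail_eq: "exp_tail r j = exp r - (\<Sum>m<j. r ^ m / fact m)"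
  unfolding exp_tail_def by (rule sums_unique[OF exp_tail_sums, symmetric])

lemma exp_tail_tendsto_0: "exp_tail r \<longlonglongrightarrow> 0"
proof -
  have "(\<lambda>j. \<Sum>m<j. r ^ m / fact m) \<longlonglongrightarrow> exp r"
    using exp_tail_sums[of 0 r] by (simp add: sums_def)
  then have "(\<lambda>j. exp r - (\<Sum>m<j. r ^ m / fact m)) \<longlonglongrightarrow> exp r - exp r"
    by (intro tendsto_diff tendsto_const)
  then show ?thesis by (simp add: exp_tail_eq[abs_def])
qed

lemma exp_tail_nonneg: "0 \<le> r \<Longrightarrow> 0 \<le> exp_tail r j"
  unfolding exp_tail_def by (intro suminf_nonneg summable_exp_tail) simp

lemma exp_tail_le_exp: "0 \<le> r \<Longrightarrow> exp_tail r j \<le> exp r"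
  by (simp add: exp_tail_eq sum_nonneg)

definition expHz1 :: "nat \<Rightarrow> real \<Rightarrow> complex \<Rightarrow> nat \<Rightarrow> complex" where
  "expHz1 n g x k = (\<Sum>m. (x ^ m / of_nat (fact m)) * (Happ n g ^^ m) (z1 n) k)"

lemma expH_z1_eq_expHz1: "expH n g t (z1 n) k = expHz1 n g (- \<i> * of_real t) k"
  unfolding expH_def expHz1_def ..

lemma norm_z1_le_1: "cmod (z1 n k) \<le> 1"
  unfolding z1_def by (auto simp: norm_divide)

lemma norm_expHz1_term_le:
  assumes "cmod x \<le> s"
  shows "cmod ((x ^ m / of_nat (fact m)) * (Happ n g ^^ m) (z1 n) k)
           \<le> (if k - n \<le> m then (s * H_row_bound n g) ^ m / fact m else 0)"
proof (cases "k - n \<le> m")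
  case True
  have "0 \<le> s" using assms norm_ge_zero order_trans by blast
  have "cmod ((Happ n g ^^ m) (z1 n) k) \<le> H_row_bound n g ^ m"
    using norm_Happ_pow_le[of "z1 n" 1] by (simp add: norm_z1_le_1)
  moreover have "cmod x ^ m \<le> s ^ m"
    using assms by (simp add: power_mono)
  ultimately have "cmod x ^ m * cmod ((Happ n g ^^ m) (z1 n) k) \<le> s ^ m * H_row_bound n g ^ m"
    using \<open>0 \<le> s\<close> by (intro mult_mono) auto
  then show ?thesis
    using True by (simp add: norm_mult norm_divide norm_power power_mult_distrib divide_right_mono)
next
  case False
  then have "(Happ n g ^^ m) (z1 n) k = 0"
    by (intro Happ_pow_eq_0_beyond[of n "z1 n"]) (auto simp: z1_def)
  then show ?thesis using False by simp
qed

lemma summable_expHz1: "summable (\<lambda>m. (x ^ m / of_nat (fact m)) * (Happ n g ^^ m) (z1 n) k)"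
  using norm_expHz1_term_le[OF order_refl]
  by (rule summable_comparison_test'[OF summable_exp_tail])

lemma norm_expHz1_le:
  assumes "cmod x \<le> s"
  shows "cmod (expHz1 n g x k) \<le> exp_tail (s * H_row_bound n g) (k - n)"
  unfolding expHz1_def exp_tail_def
  by (rule norm_suminf_le[OF norm_expHz1_term_le[OF assms] summable_exp_tail])

lemma expHz1_0: "expHz1 n g 0 k = z1 n k"
  using powser_zero[of "\<lambda>m. (Happ n g ^^ m) (z1 n) k / of_nat (fact m)"]
  by (simp add: expHz1_def mult.commute)

lemma cnj_expHz1: "cnj (expHz1 n g x k) = expHz1 n g (cnj x) k"
proof -
  have "(\<lambda>m. cnj ((x ^ m / of_nat (fact m)) * (Happ n g ^^ m) (z1 n) k)) sums cnj (expHz1 n g x k)"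
    unfolding sums_cnj expHz1_def by (rule summable_sums[OF summable_expHz1])
  then show ?thesis
    unfolding expHz1_def by (simp add: cnj_Happ_pow z1_def sums_iff)
qed

lemma has_field_derivative_expHz1:
  "((\<lambda>x. expHz1 n g x k) has_field_derivative Happ n g (expHz1 n g x) k) (at x)"
proof -
  define c where "c m = (Happ n g ^^ m) (z1 n) k / of_nat (fact m)" for m
  define a where "a j m = (x ^ m / of_nat (fact m)) * (Happ n g ^^ m) (z1 n) j" for j m
  have series: "expHz1 n g y k = (\<Sum>m. c m * y ^ m)" for y
    unfolding expHz1_def c_def by (simp add: mult.commute)
  have "diffs c m * x ^ m = (\<Sum>j\<in>{1..max n (k + 1)}. Hent n g k j * a j m)" for m
  proof -
    have "diffs c m = (Happ n g ^^ Suc m) (z1 n) k / of_nat (fact m)"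
      unfolding diffs_def c_def fact_Suc of_nat_mult by (simp add: field_simps del: of_nat_Suc)
    then show ?thesis
      by (simp add: a_def Happ_def sum_distrib_left sum_divide_distrib sum_distrib_right algebra_simps)
  qed
  then have "(\<Sum>m. diffs c m * x ^ m) = (\<Sum>m. \<Sum>j\<in>{1..max n (k + 1)}. Hent n g k j * a j m)"
    by simp
  also have "\<dots> = (\<Sum>j\<in>{1..max n (k + 1)}. \<Sum>m. Hent n g k j * a j m)"
    unfolding a_def by (intro suminf_sum summable_mult summable_expHz1)
  also have "\<dots> = (\<Sum>j\<in>{1..max n (k + 1)}. Hent n g k j * expHz1 n g x j)"
    unfolding expHz1_def a_def by (intro sum.cong refl suminf_mult summable_expHz1)
  also have "\<dots> = Happ n g (expHz1 n g x) k"
    by (simp add: Happ_def)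
  moreover have "summable (\<lambda>m. c m * y ^ m)" for y
    using summable_expHz1[of y n g k] by (simp add: c_def mult.commute)
  ultimately show ?thesis
    unfolding series using termdiffs_strong_converges_everywhere[of c x] by simp
qed

lemma has_field_derivative_expHz1_scaled:
  "((\<lambda>s. expHz1 n g (c * s) k) has_field_derivative Happ n g (expHz1 n g (c * s)) k * c) (at s within S)"
  by (rule has_field_derivative_at_within, rule DERIV_chain2[OF has_field_derivative_expHz1])
     (auto intro!: derivative_eq_intros)

section \<open>Conservation of norm\<close>

lemma Happ_eq_truncated:
  assumes "n \<le> K" "k \<in> {1..K}"
  shows "Happ n g X k = (\<Sum>j\<in>{1..K}. Hent n g k j * X j) + (if k = K then X (K + 1) else 0)"
proof -
  have "Happ n g X k = (\<Sum>j\<in>{1..K + 1}. Hent n g k j * X j)"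
    unfolding Happ_def using assms
    by (intro sum.mono_neutral_left) (auto simp: not_le intro!: Hent_eq_0_beyond)
  also have "\<dots> = (\<Sum>j\<in>{1..K}. Hent n g k j * X j) + Hent n g k (K + 1) * X (K + 1)"
    by (simp add: atLeastAtMostSuc_conv)
  also have "Hent n g k (K + 1) = (if k = K then 1 else 0)"
    using assms unfolding Hent_def by auto
  finally show ?thesis by simp
qed

lemma Happ_Green_identity:
  assumes "n \<le> K" "1 \<le> K"
  shows "(\<Sum>k\<in>{1..K}. Happ n g X k * Y k - X k * Happ n g Y k) = X (K + 1) * Y K - X K * Y (K + 1)"
proof -
  have "(\<Sum>k\<in>{1..K}. Happ n g X k * Y k - X k * Happ n g Y k)
     = (\<Sum>k\<in>{1..K}. (\<Sum>j\<in>{1..K}. Hent n g k j * X j * Y k) - (\<Sum>j\<in>{1..K}. Hent n g k j * X k * Y j)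
          + (if k = K then X (K + 1) * Y K - X K * Y (K + 1) else 0))"
    using assms(1)
    by (intro sum.cong refl) (simp add: Happ_eq_truncated sum_distrib_left sum_distrib_right algebra_simps)
  also have "\<dots> = (\<Sum>k\<in>{1..K}. \<Sum>j\<in>{1..K}. Hent n g k j * X j * Y k)
       - (\<Sum>k\<in>{1..K}. \<Sum>j\<in>{1..K}. Hent n g k j * X k * Y j) + (X (K + 1) * Y K - X K * Y (K + 1))"
    using assms(2) by (simp add: sum.distrib sum_subtractf)
  also have "(\<Sum>k\<in>{1..K}. \<Sum>j\<in>{1..K}. Hent n g k j * X j * Y k)
      = (\<Sum>k\<in>{1..K}. \<Sum>j\<in>{1..K}. Hent n g k j * X k * Y j)"
    by (subst sum.swap) (simp add: Hent_sym)
  finally show ?thesis by simp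
qed

text \<open>For real \<open>s\<close> this is the squared norm of \<open>exp(-isH) z\<^sub>1\<close> on the window \<open>{1..K}\<close>
  (\<open>window_mass_of_real\<close>); continuing it analytically in \<open>s\<close> avoids differentiating moduli.\<close>
definition window_mass :: "nat \<Rightarrow> real \<Rightarrow> nat \<Rightarrow> complex \<Rightarrow> complex" where
  "window_mass n g K s = (\<Sum>k\<in>{1..K}. expHz1 n g (\<i> * s) k * expHz1 n g (- \<i> * s) k)"

lemma window_mass_of_real:
  "window_mass n g K (of_real \<sigma>) = of_real (\<Sum>k\<in>{1..K}. (cmod (expHz1 n g (- \<i> * of_real \<sigma>) k))\<^sup>2)"
proof -
  have "expHz1 n g (\<i> * of_real \<sigma>) k = cnj (expHz1 n g (- \<i> * of_real \<sigma>) k)" for k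
    by (simp add: cnj_expHz1)
  then show ?thesis
    unfolding window_mass_def of_real_sum
    by (intro sum.cong refl) (simp add: complex_norm_square mult.commute del: of_real_power)
qed

lemma window_mass_0:
  assumes "1 \<le> n" "n \<le> K"
  shows "window_mass n g K 0 = 1"
proof -
  have "window_mass n g K 0 = (\<Sum>k\<in>{1..K}. z1 n k * z1 n k)"
    by (simp add: window_mass_def expHz1_0)
  also have "\<dots> = (\<Sum>k\<in>{1..n}. complex_of_real (1 / real n))"
    using assms by (intro sum.mono_neutral_cong_right) (auto simp: z1_def of_real_mult [symmetric])
  also have "\<dots> = 1" using assms by simp
  finally show ?thesis .
qed

lemma has_field_derivative_window_mass:
  assumes "n \<le> K" "1 \<le> K"
  shows "(window_mass n g K has_field_derivative
     \<i> * (expHz1 n g (\<i> * s) (K + 1) * expHz1 n g (- \<i> * s) K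
          - expHz1 n g (\<i> * s) K * expHz1 n g (- \<i> * s) (K + 1))) (at s within S)"
proof -
  let ?X = "expHz1 n g (\<i> * s)" and ?Y = "expHz1 n g (- \<i> * s)"
  have "(window_mass n g K has_field_derivative
     (\<Sum>k\<in>{1..K}. ?X k * (Happ n g ?Y k * - \<i>) + Happ n g ?X k * \<i> * ?Y k)) (at s within S)"
    unfolding window_mass_def [abs_def]
    by (intro DERIV_sum DERIV_mult' has_field_derivative_expHz1_scaled)
  also have "(\<Sum>k\<in>{1..K}. ?X k * (Happ n g ?Y k * - \<i>) + Happ n g ?X k * \<i> * ?Y k)
     = \<i> * (\<Sum>k\<in>{1..K}. Happ n g ?X k * ?Y k - ?X k * Happ n g ?Y k)"
    by (simp add: sum_distrib_left algebra_simps)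
  finally show ?thesis
    by (simp only: Happ_Green_identity[OF assms])
qed

lemma norm_window_mass_sub_1_le:
  fixes \<sigma> g :: real
  assumes "1 \<le> n" "n \<le> K"
  defines "r \<equiv> \<bar>\<sigma>\<bar> * H_row_bound n g"
  shows "cmod (window_mass n g K (of_real \<sigma>) - 1) \<le> 2 * exp_tail r (K - n) * exp r * \<bar>\<sigma>\<bar>"
proof -
  let ?T = "exp_tail r"
  have r: "0 \<le> r" unfolding r_def by (simp add: H_row_bound_nonneg)
  have "cmod (window_mass n g K (of_real \<sigma>) - window_mass n g K 0) \<le> 2 * ?T (K - n) * exp r * cmod (of_real \<sigma> - 0)"
  proof (rule field_differentiable_bound[OF _ has_field_derivative_window_mass[OF assms(2)]])
    fix z assume "z \<in> closed_segment 0 (complex_of_real \<sigma>)"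
    then have "cmod z \<le> \<bar>\<sigma>\<bar>" "cmod (- \<i> * z) \<le> \<bar>\<sigma>\<bar>" "cmod (\<i> * z) \<le> \<bar>\<sigma>\<bar>"
      using segment_bound[of z 0 "complex_of_real \<sigma>"] by (auto simp: norm_mult)
    then have bound: "cmod (expHz1 n g (c * z) k) \<le> ?T (k - n)" if "c = \<i> \<or> c = - \<i>" for c k
      using that unfolding r_def by (auto intro!: norm_expHz1_le)
    have T: "0 \<le> ?T j" "?T j \<le> exp r" for j
      using r by (simp_all add: exp_tail_nonneg exp_tail_le_exp)
    have "cmod (\<i> * (expHz1 n g (\<i> * z) (K + 1) * expHz1 n g (- \<i> * z) K
                   - expHz1 n g (\<i> * z) K * expHz1 n g (- \<i> * z) (K + 1)))
        \<le> cmod (expHz1 n g (\<i> * z) (K + 1)) * cmod (expHz1 n g (- \<i> * z) K)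
          + cmod (expHz1 n g (\<i> * z) K) * cmod (expHz1 n g (- \<i> * z) (K + 1))"
      by (metis norm_ii norm_mult mult_1 norm_triangle_ineq4)
    also have "\<dots> \<le> exp r * ?T (K - n) + ?T (K - n) * exp r"
      by (intro add_mono mult_mono order_trans[OF bound T(2)] bound T(1)) auto
    finally show "cmod (\<i> * (expHz1 n g (\<i> * z) (K + 1) * expHz1 n g (- \<i> * z) K
                   - expHz1 n g (\<i> * z) K * expHz1 n g (- \<i> * z) (K + 1)))
        \<le> 2 * ?T (K - n) * exp r" by (simp add: mult_ac)
  qed (use assms in auto)
  then show ?thesis using window_mass_0[OF assms(1,2)] by simp
qed

lemma sum_norm_expHz1_le_1:
  assumes "1 \<le> n"
  shows "(\<Sum>k\<in>{1..K}. (cmod (expHz1 n g (- \<i> * of_real \<sigma>) k))\<^sup>2) \<le> 1"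
proof -
  define r where "r = \<bar>\<sigma>\<bar> * H_row_bound n g"
  let ?S = "\<lambda>K. \<Sum>k\<in>{1..K}. (cmod (expHz1 n g (- \<i> * of_real \<sigma>) k))\<^sup>2"
  have "?S K \<le> 1 + 2 * exp_tail r (K + j) * exp r * \<bar>\<sigma>\<bar>" for j
  proof -
    have "?S K \<le> ?S (K + n + j)"
      by (intro sum_mono2) auto
    also have "\<dots> = Re (window_mass n g (K + n + j) (of_real \<sigma>))"
      by (simp add: window_mass_of_real)
    also have "\<dots> \<le> 1 + cmod (window_mass n g (K + n + j) (of_real \<sigma>) - 1)"
      using complex_Re_le_cmod[of "window_mass n g (K + n + j) (of_real \<sigma>) - 1"] by simp
    also have "\<dots> \<le> 1 + 2 * exp_tail r (K + j) * exp r * \<bar>\<sigma>\<bar>"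
      using norm_window_mass_sub_1_le[OF assms, of "K + n + j" g \<sigma>] by (simp add: r_def)
    finally show ?thesis .
  qed
  moreover have "(\<lambda>j. 1 + 2 * exp_tail r (K + j) * exp r * \<bar>\<sigma>\<bar>) \<longlonglongrightarrow> 1 + 2 * 0 * exp r * \<bar>\<sigma>\<bar>"
    using LIMSEQ_ignore_initial_segment[OF exp_tail_tendsto_0, of r K]
    by (intro tendsto_intros) (simp add: add.commute)
  ultimately show ?thesis
    by (intro LIMSEQ_le_const[of _ "1"]) auto
qed

lemma norm_expHz1_le_1:
  assumes "1 \<le> n" "1 \<le> k"
  shows "cmod (expHz1 n g (- \<i> * of_real \<sigma>) k) \<le> 1"
proof -
  have "(cmod (expHz1 n g (- \<i> * of_real \<sigma>) k))\<^sup>2 \<le> 1"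
    using member_le_sum[of k "{1..k}" "\<lambda>k. (cmod (expHz1 n g (- \<i> * of_real \<sigma>) k))\<^sup>2"]
          sum_norm_expHz1_le_1[OF assms(1), of g \<sigma> k] assms(2) by simp
  then show ?thesis by (simp add: power_le_one_iff abs_le_iff)
qed

section \<open>A two-mode system\<close>

definition two_mode_wave :: "real \<Rightarrow> real \<Rightarrow> complex \<Rightarrow> complex" where
  "two_mode_wave w t s = exp (\<i> * of_real w * (s - of_real t))"

lemma has_field_derivative_two_mode_wave:
  "(two_mode_wave w t has_field_derivative \<i> * of_real w * two_mode_wave w t s) (at s within S)"
  unfolding two_mode_wave_def [abs_def] by (auto intro!: derivative_eq_intros)

lemma norm_two_mode_wave_of_real: "cmod (two_mode_wave w t (of_real \<sigma>)) = 1"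
proof -
  have "two_mode_wave w t (of_real \<sigma>) = exp (\<i> * of_real (w * (\<sigma> - t)))"
    unfolding two_mode_wave_def by (simp add: algebra_simps)
  then show ?thesis by simp
qed

definition two_mode_disc :: "real \<Rightarrow> real \<Rightarrow> real \<Rightarrow> real" where
  "two_mode_disc a c g = sqrt ((g - a)\<^sup>2 + 4 * c)"

text \<open>For the matrix \<open>M\<close> with rows \<open>(a, c)\<close> and \<open>(1, g)\<close>, whose eigenvalues are
  \<open>(a + g \<plusminus> two_mode_disc a c g) / 2\<close>, the row vector \<open>(two_mode_p, two_mode_q)\<close> is
  \<open>(0, 1) exp(i (s - t) M)\<close> written in the eigenbasis of \<open>M\<close>.\<close>
definition two_mode_p :: "real \<Rightarrow> real \<Rightarrow> real \<Rightarrow> real \<Rightarrow> complex \<Rightarrow> complex" where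
  "two_mode_p a c g t s =
     (two_mode_wave ((a + g + two_mode_disc a c g) / 2) t s
      - two_mode_wave ((a + g - two_mode_disc a c g) / 2) t s) / of_real (two_mode_disc a c g)"

definition two_mode_q :: "real \<Rightarrow> real \<Rightarrow> real \<Rightarrow> real \<Rightarrow> complex \<Rightarrow> complex" where
  "two_mode_q a c g t s =
     (two_mode_wave ((a + g + two_mode_disc a c g) / 2) t s
      + two_mode_wave ((a + g - two_mode_disc a c g) / 2) t s) / 2
     + of_real (g - a) * (two_mode_wave ((a + g + two_mode_disc a c g) / 2) t s
                          - two_mode_wave ((a + g - two_mode_disc a c g) / 2) t s)
       / (2 * of_real (two_mode_disc a c g))"

lemma two_mode_disc_ge: "0 \<le> c \<Longrightarrow> 2 * sqrt c \<le> two_mode_disc a c g"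
  unfolding two_mode_disc_def
  by (metis real_sqrt_four real_sqrt_le_mono real_sqrt_mult le_add_same_cancel2 zero_le_power2)

lemma two_mode_disc_pos: "0 < c \<Longrightarrow> 0 < two_mode_disc a c g"
  using two_mode_disc_ge[of c a g] by (smt (verit) real_sqrt_gt_zero)

lemma two_mode_disc_sq: "0 \<le> c \<Longrightarrow> (two_mode_disc a c g)\<^sup>2 = (g - a)\<^sup>2 + 4 * c"
  unfolding two_mode_disc_def by simp

lemma two_mode_p_end: "two_mode_p a c g t (of_real t) = 0"
  and two_mode_q_end: "two_mode_q a c g t (of_real t) = 1"
  unfolding two_mode_p_def two_mode_q_def two_mode_wave_def by simp_all

lemma has_field_derivative_two_mode_p:
  assumes "0 < c"
  shows "(two_mode_p a c g t has_field_derivative \<i> * (of_real a * two_mode_p a c g t s + two_mode_q a c g t s)) (at s within S)"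
proof -
  define D where "D = two_mode_disc a c g"
  define X where "X = two_mode_wave ((a + g + D) / 2) t s"
  define Y where "Y = two_mode_wave ((a + g - D) / 2) t s"
  have "0 < D" unfolding D_def by (rule two_mode_disc_pos[OF assms])
  then have D: "of_real D \<noteq> (0 :: complex)" by simp
  have "(two_mode_p a c g t has_field_derivative
      (\<i> * of_real ((a + g + D) / 2) * X - \<i> * of_real ((a + g - D) / 2) * Y) / of_real D) (at s within S)"
    unfolding two_mode_p_def [abs_def] X_def Y_def D_def
    by (intro DERIV_cdivide DERIV_diff has_field_derivative_two_mode_wave)
  also have "(\<i> * of_real ((a + g + D) / 2) * X - \<i> * of_real ((a + g - D) / 2) * Y) / of_real D
      = \<i> * (of_real a * two_mode_p a c g t s + two_mode_q a c g t s)"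
    using D unfolding two_mode_p_def two_mode_q_def X_def Y_def D_def [symmetric] by (simp add: field_simps)
  finally show ?thesis .
qed

lemma has_field_derivative_two_mode_q:
  assumes "0 < c"
  shows "(two_mode_q a c g t has_field_derivative \<i> * (of_real c * two_mode_p a c g t s + of_real g * two_mode_q a c g t s)) (at s within S)"
proof -
  define D where "D = two_mode_disc a c g"
  define X where "X = two_mode_wave ((a + g + D) / 2) t s"
  define Y where "Y = two_mode_wave ((a + g - D) / 2) t s"
  have "0 < D" unfolding D_def by (rule two_mode_disc_pos[OF assms])
  then have D: "of_real D \<noteq> (0 :: complex)" by simp
  have D2: "(of_real D)\<^sup>2 = (of_real (g - a))\<^sup>2 + 4 * (of_real c :: complex)"
    using two_mode_disc_sq[of c a g] assms unfolding D_def [symmetric] of_real_power [symmetric] by simp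
  have "(two_mode_q a c g t has_field_derivative
      (\<i> * of_real ((a + g + D) / 2) * X + \<i> * of_real ((a + g - D) / 2) * Y) / 2
      + of_real (g - a) * (\<i> * of_real ((a + g + D) / 2) * X - \<i> * of_real ((a + g - D) / 2) * Y)
        / (2 * of_real D)) (at s within S)"
    unfolding two_mode_q_def [abs_def] X_def Y_def D_def
    by (intro DERIV_add DERIV_cdivide DERIV_cmult DERIV_diff has_field_derivative_two_mode_wave)
  also have "(\<i> * of_real ((a + g + D) / 2) * X + \<i> * of_real ((a + g - D) / 2) * Y) / 2
      + of_real (g - a) * (\<i> * of_real ((a + g + D) / 2) * X - \<i> * of_real ((a + g - D) / 2) * Y)
        / (2 * of_real D)
      = \<i> * (of_real c * two_mode_p a c g t s + of_real g * two_mode_q a c g t s)"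
  proof -
    have "(\<i> * of_real ((a + g + D) / 2) * X + \<i> * of_real ((a + g - D) / 2) * Y) / 2
      + of_real (g - a) * (\<i> * of_real ((a + g + D) / 2) * X - \<i> * of_real ((a + g - D) / 2) * Y)
        / (2 * of_real D) - \<i> * (of_real c * two_mode_p a c g t s + of_real g * two_mode_q a c g t s)
      = \<i> * (X - Y) * (((of_real D)\<^sup>2 - (of_real (g - a))\<^sup>2 - 4 * of_real c) / (4 * of_real D))"
      using D unfolding two_mode_p_def two_mode_q_def X_def Y_def D_def [symmetric]
      by (simp add: field_simps power2_eq_square)
    then show ?thesis using D2 by simp
  qed
  finally show ?thesis .
qed

lemma norm_two_mode_q_of_real_le:
  assumes "0 < c"
  shows "cmod (two_mode_q a c g t (of_real \<sigma>)) \<le> 1 + \<bar>g - a\<bar> / two_mode_disc a c g"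
proof -
  define D where "D = two_mode_disc a c g"
  define X where "X = two_mode_wave ((a + g + D) / 2) t (of_real \<sigma>)"
  define Y where "Y = two_mode_wave ((a + g - D) / 2) t (of_real \<sigma>)"
  have D: "0 < D" unfolding D_def by (rule two_mode_disc_pos[OF assms])
  have XY: "cmod X = 1" "cmod Y = 1" by (simp_all add: X_def Y_def norm_two_mode_wave_of_real)
  have "cmod ((X + Y) / 2) \<le> 1"
    using norm_triangle_ineq[of X Y] XY by (simp add: norm_divide)
  moreover have "cmod (of_real (g - a) * (X - Y) / (2 * of_real D)) \<le> \<bar>g - a\<bar> / D"
  proof -
    have "cmod (X - Y) \<le> 2" using norm_triangle_ineq4[of X Y] XY by simp
    then have "\<bar>g - a\<bar> * cmod (X - Y) / (2 * D) \<le> \<bar>g - a\<bar> * 2 / (2 * D)"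
      using D by (intro divide_right_mono mult_left_mono) auto
    then show ?thesis using D by (simp add: norm_mult norm_divide flip: of_real_diff)
  qed
  ultimately show ?thesis
    unfolding two_mode_q_def X_def [symmetric] Y_def [symmetric] D_def [symmetric]
    using norm_triangle_ineq[of "(X + Y) / 2" "of_real (g - a) * (X - Y) / (2 * of_real D)"] by linarith
qed

section \<open>Reduction to the clique and the hub\<close>

abbreviation hub_disc :: "nat \<Rightarrow> real \<Rightarrow> real" where
  "hub_disc n g \<equiv> two_mode_disc (real n - 2) (real n - 1) g"

abbreviation hub_p :: "nat \<Rightarrow> real \<Rightarrow> real \<Rightarrow> complex \<Rightarrow> complex" where
  "hub_p n g \<equiv> two_mode_p (real n - 2) (real n - 1) g"

abbreviation hub_q :: "nat \<Rightarrow> real \<Rightarrow> real \<Rightarrow> complex \<Rightarrow> complex" where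
  "hub_q n g \<equiv> two_mode_q (real n - 2) (real n - 1) g"

lemma Happ_clique_row:
  assumes "2 \<le> n" "j \<in> {1..n - 1}"
  shows "Happ n g w j = (\<Sum>l\<in>{1..n - 1}. w l) + w n - w j"
proof -
  have j: "j \<in> {1..n}" using assms by auto
  have "Happ n g w j = (\<Sum>l\<in>{1..n}. (if l = j then 0 else 1) * w l)"
    unfolding Happ_def using assms by (intro sum.cong) (auto simp: Hent_def max_def)
  also have "\<dots> = (\<Sum>l\<in>{1..n}. w l - (if l = j then w l else 0))"
    by (intro sum.cong) auto
  also have "\<dots> = (\<Sum>l\<in>{1..n}. w l) - w j"
    using j by (simp add: sum_subtractf)
  also have "(\<Sum>l\<in>{1..n}. w l) = (\<Sum>l\<in>{1..n - 1}. w l) + w n"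
    using assms by (cases n) (auto simp: atLeastAtMostSuc_conv)
  finally show ?thesis .
qed

lemma Happ_clique_sum:
  assumes "2 \<le> n"
  shows "(\<Sum>j\<in>{1..n - 1}. Happ n g w j)
    = of_real (real n - 2) * (\<Sum>l\<in>{1..n - 1}. w l) + of_real (real n - 1) * w n"
proof -
  have "(\<Sum>j\<in>{1..n - 1}. Happ n g w j) = (\<Sum>j\<in>{1..n - 1}. (\<Sum>l\<in>{1..n - 1}. w l) + w n - w j)"
    using assms by (intro sum.cong refl Happ_clique_row) auto
  also have "\<dots> = of_nat (n - 1) * ((\<Sum>l\<in>{1..n - 1}. w l) + w n) - (\<Sum>l\<in>{1..n - 1}. w l)"
    by (simp add: sum_subtractf)
  also have "\<dots> = of_real (real n - 2) * (\<Sum>l\<in>{1..n - 1}. w l) + of_real (real n - 1) * w n"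
    using assms by (simp add: of_nat_diff algebra_simps)
  finally show ?thesis .
qed

lemma Happ_hub_row:
  assumes "2 \<le> n"
  shows "Happ n g w n = (\<Sum>l\<in>{1..n - 1}. w l) + of_real g * w n + w (n + 1)"
proof -
  have "Happ n g w n = (\<Sum>l\<in>{1..n - 1}. Hent n g n l * w l) + Hent n g n n * w n + Hent n g n (n + 1) * w (n + 1)"
    using assms unfolding Happ_def by (cases n) (auto simp: atLeastAtMostSuc_conv)
  also have "(\<Sum>l\<in>{1..n - 1}. Hent n g n l * w l) = (\<Sum>l\<in>{1..n - 1}. w l)"
    by (intro sum.cong refl) (auto simp: Hent_def)
  finally show ?thesis by (simp add: Hent_def)
qed

definition clique_part :: "nat \<Rightarrow> real \<Rightarrow> complex \<Rightarrow> complex" where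
  "clique_part n g s = (\<Sum>j\<in>{1..n - 1}. expHz1 n g (- \<i> * s) j)"

definition hub_pairing :: "nat \<Rightarrow> real \<Rightarrow> real \<Rightarrow> complex \<Rightarrow> complex" where
  "hub_pairing n g t s =
     hub_p n g t s * clique_part n g s
     + hub_q n g t s * expHz1 n g (- \<i> * s) n"

lemma has_field_derivative_clique_part:
  assumes "2 \<le> n"
  shows "(clique_part n g has_field_derivative
     - \<i> * (of_real (real n - 2) * clique_part n g s + of_real (real n - 1) * expHz1 n g (- \<i> * s) n))
     (at s within S)"
proof -
  have "(clique_part n g has_field_derivative (\<Sum>j\<in>{1..n - 1}. Happ n g (expHz1 n g (- \<i> * s)) j * - \<i>))
      (at s within S)"
    unfolding clique_part_def [abs_def] by (intro DERIV_sum has_field_derivative_expHz1_scaled)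
  then show ?thesis
    unfolding sum_distrib_right [symmetric] Happ_clique_sum[OF assms] clique_part_def
    by (simp add: algebra_simps)
qed

lemma has_field_derivative_hub_amplitude:
  assumes "2 \<le> n"
  shows "((\<lambda>s. expHz1 n g (- \<i> * s) n) has_field_derivative
     - \<i> * (clique_part n g s + of_real g * expHz1 n g (- \<i> * s) n + expHz1 n g (- \<i> * s) (n + 1)))
     (at s within S)"
  using has_field_derivative_expHz1_scaled[of n g "- \<i>" n s S]
  unfolding Happ_hub_row[OF assms] clique_part_def by (simp add: algebra_simps)

lemma has_field_derivative_hub_pairing:
  assumes "2 \<le> n"
  shows "(hub_pairing n g t has_field_derivative
     - \<i> * hub_q n g t s * expHz1 n g (- \<i> * s) (n + 1)) (at s within S)"
proof -
  let ?A = "clique_part n g s" and ?Y = "expHz1 n g (- \<i> * s)"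
  let ?p = "hub_p n g t s" and ?q = "hub_q n g t s"
  have c: "0 < real n - 1" using assms by simp
  have "(hub_pairing n g t has_field_derivative
      ?p * (- \<i> * (of_real (real n - 2) * ?A + of_real (real n - 1) * ?Y n))
      + \<i> * (of_real (real n - 2) * ?p + ?q) * ?A
      + (?q * (- \<i> * (?A + of_real g * ?Y n + ?Y (n + 1)))
      + \<i> * (of_real (real n - 1) * ?p + of_real g * ?q) * ?Y n)) (at s within S)"
    unfolding hub_pairing_def [abs_def]
    by (intro DERIV_add DERIV_mult' has_field_derivative_two_mode_p[OF c] has_field_derivative_two_mode_q[OF c]
        has_field_derivative_clique_part[OF assms] has_field_derivative_hub_amplitude[OF assms])
  then show ?thesis
    by (rule DERIV_cong) (simp add: algebra_simps)
qed

lemma hub_pairing_end: "hub_pairing n g t (of_real t) = expHz1 n g (- \<i> * of_real t) n"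
  by (simp add: hub_pairing_def two_mode_p_end two_mode_q_end)

lemma norm_expHz1_hub_sub_pairing_le:
  assumes "2 \<le> n" "0 \<le> t"
  shows "cmod (expHz1 n g (- \<i> * of_real t) n - hub_pairing n g t 0)
    \<le> (1 + \<bar>g - (real n - 2)\<bar> / hub_disc n g) * t"
proof -
  have c: "0 < real n - 1" using assms by simp
  have D: "0 < hub_disc n g" by (rule two_mode_disc_pos[OF c])
  have "cmod (hub_pairing n g t (of_real t) - hub_pairing n g t 0)
    \<le> (1 + \<bar>g - (real n - 2)\<bar> / hub_disc n g) * cmod (of_real t - 0)"
  proof (rule field_differentiable_bound[OF _ has_field_derivative_hub_pairing[OF assms(1)]])
    fix z assume "z \<in> closed_segment 0 (complex_of_real t)"
    then obtain u where z: "z = of_real (u * t)"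
      by (auto simp: in_segment scaleR_conv_of_real)
    have "cmod (- \<i> * hub_q n g t z * expHz1 n g (- \<i> * z) (n + 1))
        = cmod (hub_q n g t z) * cmod (expHz1 n g (- \<i> * z) (n + 1))"
      by (simp add: norm_mult)
    also have "\<dots> \<le> (1 + \<bar>g - (real n - 2)\<bar> / hub_disc n g) * 1"
      unfolding z using assms(1) D
      by (intro mult_mono norm_two_mode_q_of_real_le[OF c] norm_expHz1_le_1) auto
    finally show "cmod (- \<i> * hub_q n g t z * expHz1 n g (- \<i> * z) (n + 1))
        \<le> 1 + \<bar>g - (real n - 2)\<bar> / hub_disc n g"
      by simp
  qed auto
  then show ?thesis using assms(2) by (simp add: hub_pairing_end)
qed

definition hub_weight_plus :: "nat \<Rightarrow> real \<Rightarrow> real" where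
  "hub_weight_plus n g =
     ((real n - 1) / hub_disc n g + 1 / 2
      + (g - (real n - 2)) / (2 * hub_disc n g)) / sqrt (real n)"

definition hub_weight_minus :: "nat \<Rightarrow> real \<Rightarrow> real" where
  "hub_weight_minus n g =
     (- (real n - 1) / hub_disc n g + 1 / 2
      - (g - (real n - 2)) / (2 * hub_disc n g)) / sqrt (real n)"

lemma norm_hub_pairing_0:
  assumes "2 \<le> n"
  shows "cmod (hub_pairing n g t 0) = cmod (of_real (hub_weight_plus n g)
           + of_real (hub_weight_minus n g) * exp (\<i> * of_real (hub_disc n g * t)))"
proof -
  define D where "D = hub_disc n g"
  define W where "W = two_mode_wave ((real n - 2 + g + D) / 2) t 0"
  define E where "E = exp (\<i> * of_real (D * t))"
  define s where "s = sqrt (real n)"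
  have D: "of_real D \<noteq> (0 :: complex)"
    unfolding D_def using assms two_mode_disc_pos[of "real n - 1" "real n - 2" g] by simp
  have s: "of_real s \<noteq> (0 :: complex)" unfolding s_def using assms by simp
  have "clique_part n g 0 = (\<Sum>j\<in>{1..n - 1}. of_real (1 / s))"
    unfolding clique_part_def s_def by (intro sum.cong) (auto simp: expHz1_0 z1_def)
  also have "\<dots> = of_real (real n - 1) / of_real s"
    using assms by (simp add: of_nat_diff)
  finally have clique: "clique_part n g 0 = of_real (real n - 1) / of_real s" .
  have hub: "expHz1 n g (- \<i> * 0) n = 1 / of_real s"
    using assms by (simp add: expHz1_0 z1_def s_def)
  have W': "two_mode_wave ((real n - 2 + g - D) / 2) t 0 = W * E"
    unfolding W_def E_def two_mode_wave_def by (simp add: exp_add [symmetric] field_simps)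
  have "hub_pairing n g t 0
      = W * (1 - E) / of_real D * (of_real (real n - 1) / of_real s)
        + (W * (1 + E) / 2 + of_real (g - (real n - 2)) * (W * (1 - E)) / (2 * of_real D)) * (1 / of_real s)"
    unfolding hub_pairing_def two_mode_p_def two_mode_q_def D_def [symmetric] W_def [symmetric] W' clique hub
    by (simp add: algebra_simps)
  also have "\<dots> = W * (of_real (hub_weight_plus n g) + of_real (hub_weight_minus n g) * E)"
    using D s unfolding hub_weight_plus_def hub_weight_minus_def D_def [symmetric] s_def [symmetric]
    by (simp add: field_simps)
  finally have "hub_pairing n g t 0 = W * (of_real (hub_weight_plus n g) + of_real (hub_weight_minus n g) * E)" .
  moreover have "cmod W = 1" unfolding W_def using norm_two_mode_wave_of_real[of _ t 0] by simp
  ultimately show ?thesis by (simp add: norm_mult D_def E_def)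
qed

lemma norm_expH_hub_approx:
  assumes "2 \<le> n" "0 \<le> t"
  shows "\<bar>cmod (expH n g t (z1 n) n)
          - cmod (of_real (hub_weight_plus n g) + of_real (hub_weight_minus n g)
                  * exp (\<i> * of_real (hub_disc n g * t)))\<bar>
    \<le> (1 + \<bar>g - (real n - 2)\<bar> / hub_disc n g) * t"
  using norm_triangle_ineq3[of "expHz1 n g (- \<i> * of_real t) n" "hub_pairing n g t 0"]
        norm_expHz1_hub_sub_pairing_le[OF assms, of g]
  by (simp add: expH_z1_eq_expHz1 norm_hub_pairing_0[OF assms(1)])

section \<open>Asymptotics\<close>

lemma bounded_div_real_tendsto_0:
  fixes f :: "nat \<Rightarrow> real"
  assumes "\<And>n. \<bar>f n\<bar> \<le> B"
  shows "(\<lambda>n. f n / real n) \<longlonglongrightarrow> 0"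
proof (rule Lim_null_comparison)
  show "\<forall>\<^sub>F n in sequentially. norm (f n / real n) \<le> B / real n"
    using assms by (intro always_eventually allI) (simp add: abs_divide divide_right_mono)
qed (rule lim_const_over_n)

lemma sqrt_div_hub_disc_tendsto:
  fixes \<gamma> :: "nat \<Rightarrow> real"
  assumes "\<And>n. \<bar>\<gamma> n - real n\<bar> \<le> C"
  shows "(\<lambda>n. sqrt (real n) / hub_disc n (\<gamma> n)) \<longlonglongrightarrow> 1 / 2"
proof -
  define d where "d n = \<gamma> n - (real n - 2)" for n
  have "\<bar>(d n)\<^sup>2\<bar> \<le> (C + 2)\<^sup>2" for n
  proof -
    have "\<bar>d n\<bar> \<le> C + 2" using assms[of n] by (simp add: d_def)
    then show ?thesis using power_mono[of "\<bar>d n\<bar>" "C + 2" 2] by simp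
  qed
  then have "(\<lambda>n. (d n)\<^sup>2 / real n) \<longlonglongrightarrow> 0"
    by (rule bounded_div_real_tendsto_0)
  then have "(\<lambda>n. inverse (sqrt ((d n)\<^sup>2 / real n + 4 - 4 / real n))) \<longlonglongrightarrow> inverse (sqrt (0 + 4 - 0))"
    by (intro tendsto_intros) auto
  moreover have "\<forall>\<^sub>F n in sequentially.
      inverse (sqrt ((d n)\<^sup>2 / real n + 4 - 4 / real n)) = sqrt (real n) / hub_disc n (\<gamma> n)"
    using eventually_ge_at_top[of 1]
  proof eventually_elim
    case (elim n)
    then have "(d n)\<^sup>2 / real n + 4 - 4 / real n = ((d n)\<^sup>2 + 4 * (real n - 1)) / real n"
      by (simp add: field_simps)
    then show ?case by (simp add: two_mode_disc_def d_def real_sqrt_divide)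
  qed
  ultimately show ?thesis by (simp add: Lim_transform_eventually)
qed

lemma hub_weights_eq:
  fixes g :: real
  assumes "2 \<le> n"
  defines "\<rho> \<equiv> sqrt (real n) / hub_disc n g" and "e \<equiv> (g - (real n - 2)) / real n"
  shows "hub_weight_plus n g = (1 - 1 / real n) * \<rho> + 1 / (2 * sqrt (real n)) + e * \<rho> / 2"
    and "hub_weight_minus n g = - ((1 - 1 / real n) * \<rho>) + 1 / (2 * sqrt (real n)) - e * \<rho> / 2"
proof -
  define D where "D = hub_disc n g"
  define s where "s = sqrt (real n)"
  have "0 < D" unfolding D_def using assms by (intro two_mode_disc_pos) simp
  moreover have "0 < s" "real n = s * s" unfolding s_def using assms by simp_all
  ultimately show "hub_weight_plus n g = (1 - 1 / real n) * \<rho> + 1 / (2 * sqrt (real n)) + e * \<rho> / 2"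
    and "hub_weight_minus n g = - ((1 - 1 / real n) * \<rho>) + 1 / (2 * sqrt (real n)) - e * \<rho> / 2"
    unfolding hub_weight_plus_def hub_weight_minus_def \<rho>_def e_def D_def [symmetric] s_def [symmetric]
    by (simp_all add: field_simps)
qed

lemma hub_weights_tendsto:
  fixes \<gamma> :: "nat \<Rightarrow> real"
  assumes "\<And>n. \<bar>\<gamma> n - real n\<bar> \<le> C"
  shows "(\<lambda>n. hub_weight_plus n (\<gamma> n)) \<longlonglongrightarrow> 1 / 2"
    and "(\<lambda>n. hub_weight_minus n (\<gamma> n)) \<longlonglongrightarrow> - 1 / 2"
proof -
  define \<rho> where "\<rho> n = sqrt (real n) / hub_disc n (\<gamma> n)" for n
  define e where "e n = (\<gamma> n - (real n - 2)) / real n" for n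
  have "\<bar>\<gamma> n - (real n - 2)\<bar> \<le> C + 2" for n
    using assms[of n] by linarith
  then have "e \<longlonglongrightarrow> 0"
    unfolding e_def by (rule bounded_div_real_tendsto_0)
  moreover have "\<rho> \<longlonglongrightarrow> 1 / 2"
    unfolding \<rho>_def by (rule sqrt_div_hub_disc_tendsto[OF assms])
  moreover have "(\<lambda>n. 1 / real n) \<longlonglongrightarrow> 0" "(\<lambda>n. 1 / (2 * sqrt (real n))) \<longlonglongrightarrow> 0"
    by real_asymp+
  ultimately have
    "(\<lambda>n. (1 - 1 / real n) * \<rho> n + 1 / (2 * sqrt (real n)) + e n * \<rho> n / 2)
       \<longlonglongrightarrow> (1 - 0) * (1 / 2) + 0 + 0 * (1 / 2) / 2"
    "(\<lambda>n. - ((1 - 1 / real n) * \<rho> n) + 1 / (2 * sqrt (real n)) - e n * \<rho> n / 2)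
       \<longlonglongrightarrow> - ((1 - 0) * (1 / 2)) + 0 - 0 * (1 / 2) / 2"
    by (intro tendsto_intros; simp)+
  moreover have "\<forall>\<^sub>F n in sequentially.
      (1 - 1 / real n) * \<rho> n + 1 / (2 * sqrt (real n)) + e n * \<rho> n / 2 = hub_weight_plus n (\<gamma> n)
      \<and> - ((1 - 1 / real n) * \<rho> n) + 1 / (2 * sqrt (real n)) - e n * \<rho> n / 2 = hub_weight_minus n (\<gamma> n)"
    using eventually_ge_at_top[of 2] by eventually_elim (simp add: hub_weights_eq \<rho>_def e_def)
  ultimately show "(\<lambda>n. hub_weight_plus n (\<gamma> n)) \<longlonglongrightarrow> 1 / 2"
    and "(\<lambda>n. hub_weight_minus n (\<gamma> n)) \<longlonglongrightarrow> - 1 / 2"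
    by (auto elim!: Lim_transform_eventually elim: eventually_mono)
qed

lemma hub_phase_tendsto:
  fixes \<gamma> :: "nat \<Rightarrow> real"
  assumes "\<And>n. \<bar>\<gamma> n - real n\<bar> \<le> C"
  shows "(\<lambda>n. hub_disc n (\<gamma> n) * (pi / (2 * sqrt (real n)))) \<longlonglongrightarrow> pi"
proof -
  have "(\<lambda>n. pi / (2 * (sqrt (real n) / hub_disc n (\<gamma> n)))) \<longlonglongrightarrow> pi / (2 * (1 / 2))"
    by (intro tendsto_intros sqrt_div_hub_disc_tendsto[OF assms]) simp
  moreover have "\<forall>\<^sub>F n in sequentially. pi / (2 * (sqrt (real n) / hub_disc n (\<gamma> n)))
      = hub_disc n (\<gamma> n) * (pi / (2 * sqrt (real n)))"
    using eventually_ge_at_top[of 2]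
    by eventually_elim (simp add: two_mode_disc_pos less_imp_neq[symmetric] field_simps)
  ultimately show ?thesis by (simp add: Lim_transform_eventually)
qed

lemma hub_error_tendsto:
  fixes \<gamma> :: "nat \<Rightarrow> real"
  assumes "\<And>n. \<bar>\<gamma> n - real n\<bar> \<le> C"
  shows "(\<lambda>n. (1 + \<bar>\<gamma> n - (real n - 2)\<bar> / hub_disc n (\<gamma> n)) * (pi / (2 * sqrt (real n))))
    \<longlonglongrightarrow> 0"
proof (rule Lim_null_comparison)
  show "\<forall>\<^sub>F n in sequentially.
      norm ((1 + \<bar>\<gamma> n - (real n - 2)\<bar> / hub_disc n (\<gamma> n)) * (pi / (2 * sqrt (real n))))
      \<le> (1 + (C + 2) / 2) * (pi / (2 * sqrt (real n)))"
    using eventually_ge_at_top[of 2]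
  proof eventually_elim
    case (elim n)
    have "1 \<le> sqrt (real n - 1)" using elim by simp
    moreover have "2 * sqrt (real n - 1) \<le> hub_disc n (\<gamma> n)"
      using elim by (intro two_mode_disc_ge) simp
    ultimately have "2 \<le> hub_disc n (\<gamma> n)" by linarith
    moreover have "\<bar>\<gamma> n - (real n - 2)\<bar> \<le> C + 2"
      using assms[of n] by linarith
    ultimately have "\<bar>\<gamma> n - (real n - 2)\<bar> / hub_disc n (\<gamma> n) \<le> (C + 2) / 2"
      by (intro frac_le) auto
    then have "(1 + \<bar>\<gamma> n - (real n - 2)\<bar> / hub_disc n (\<gamma> n)) * (pi / (2 * sqrt (real n)))
        \<le> (1 + (C + 2) / 2) * (pi / (2 * sqrt (real n)))"
      by (intro mult_right_mono) simp_all
    moreover have "0 \<le> (1 + \<bar>\<gamma> n - (real n - 2)\<bar> / hub_disc n (\<gamma> n)) * (pi / (2 * sqrt (real n)))"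
      using \<open>2 \<le> hub_disc n (\<gamma> n)\<close> by simp
    ultimately show ?case by (metis real_norm_def abs_of_nonneg)
  qed
  have "(\<lambda>n. pi / (2 * sqrt (real n))) \<longlonglongrightarrow> 0" by real_asymp
  then show "(\<lambda>n. (1 + (C + 2) / 2) * (pi / (2 * sqrt (real n)))) \<longlonglongrightarrow> 0"
    by (rule tendsto_mult_right_zero)
qed

theorem mainTheorem2:
  fixes \<gamma> :: "nat \<Rightarrow> real"
  assumes "\<exists>C. \<forall>n. \<bar>\<gamma> n - real n\<bar> \<le> C"
  shows "(\<lambda>n. cmod (expH n (\<gamma> n) (pi / (2 * sqrt (real n))) (z1 n) n)) \<longlonglongrightarrow> 1"
proof -
  obtain C where C: "\<And>n. \<bar>\<gamma> n - real n\<bar> \<le> C" using assms by blast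
  let ?t = "\<lambda>n. pi / (2 * sqrt (real n))"
  let ?G = "\<lambda>n. cmod (of_real (hub_weight_plus n (\<gamma> n)) + of_real (hub_weight_minus n (\<gamma> n))
                      * exp (\<i> * of_real (hub_disc n (\<gamma> n) * ?t n)))"
  have "?G \<longlonglongrightarrow> cmod (of_real (1 / 2) + of_real (- 1 / 2) * exp (\<i> * of_real pi))"
    using hub_weights_tendsto[OF C] hub_phase_tendsto[OF C] by (intro tendsto_intros)
  then have G: "?G \<longlonglongrightarrow> 1" by simp
  have "(\<lambda>n. cmod (expH n (\<gamma> n) (?t n) (z1 n) n) - ?G n) \<longlonglongrightarrow> 0"
  proof (rule Lim_null_comparison)
    show "\<forall>\<^sub>F n in sequentially. norm (cmod (expH n (\<gamma> n) (?t n) (z1 n) n) - ?G n)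
        \<le> (1 + \<bar>\<gamma> n - (real n - 2)\<bar> / hub_disc n (\<gamma> n)) * ?t n"
      using eventually_ge_at_top[of 2]
      by eventually_elim (unfold real_norm_def, rule norm_expH_hub_approx, simp_all)
  qed (rule hub_error_tendsto[OF C])
  from tendsto_add[OF this G] show ?thesis by simp
qed

end
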